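(* Let $G=(X,b,m,c)$ be a weighted graph with $c=0$ and let $p\in(1,\infty)$. The following are equivalent: (i) $G$ is $p$-parabolic; (ii) for every subset $V\subsetneq X$ with $\partial_eV\ne\emptyset$ and every function $u\colon X\to\mathbb{R}$ which is bounded on $\overline V=V\cup\partial_eV$, belongs to $F^p(V)$ and satisfies $\Delta_pu\le0$ on $V$, one has $\sup_{\overline V}u=\sup_{\partial_eV}u$.
   Context: Weighted graph $G=(X,b,m,c)$: $X$ countably infinite; $b$ symmetric, nonnegative, zero on the diagonal, $\sum_yb(x,y)<\infty$; $m>0$; $c\ge0$; $x\sim y$ iff $b(x,y)>0$; $X$ connected. $\mathcal{E}_p(f)=\frac12\sum_{x,y}b(x,y)|f(x)-f(y)|^p+\sum_xc(x)|f(x)|^p$; $G$ is $p$-parabolic if $\inf\{\mathcal{E}_p(\varphi):\varphi\text{ finitely supported},\varphi\ge1\text{ on }K\}=0$ for every finite $K$. $\partial_eV=\{y\in X\setminus V: y\sim z\text{ for some }z\in V\}$. $a^{\langle p-1\rangle}=|a|^{p-2}a$; $F^p(V)=\{f:\sum_yb(x,y)|f(x)-f(y)|^{p-1}<\infty\ \forall x\in V\}$; $\Delta_pf(x)=\frac1{m(x)}\sum_yb(x,y)(f(x)-f(y))^{\langle p-1\rangle}$. *)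

theory Defs
  imports "HOL-Analysis.Analysis"
begin

text \<open>Weighted graph on the vertex type 'a (X = UNIV :: 'a set).\<close>

definition weighted_graph :: "('a \<Rightarrow> 'a \<Rightarrow> real) \<Rightarrow> ('a \<Rightarrow> real) \<Rightarrow> ('a \<Rightarrow> real) \<Rightarrow> bool" where
  "weighted_graph b m c \<longleftrightarrow>
     countable (UNIV :: 'a set) \<and> infinite (UNIV :: 'a set) \<and>
     (\<forall>x y. b x y = b y x) \<and> (\<forall>x y. 0 \<le> b x y) \<and> (\<forall>x. b x x = 0) \<and>
     (\<forall>x. (\<lambda>y. b x y) summable_on UNIV) \<and>
     (\<forall>x. 0 < m x) \<and> (\<forall>x. 0 \<le> c x) \<and>
     (\<forall>x y. (\<lambda>u v. 0 < b u v)\<^sup>*\<^sup>* x y)"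

definition energy :: "('a \<Rightarrow> 'a \<Rightarrow> real) \<Rightarrow> ('a \<Rightarrow> real) \<Rightarrow> real \<Rightarrow> ('a \<Rightarrow> real) \<Rightarrow> real" where
  "energy b c p f =
     (1/2) * (\<Sum>\<^sub>\<infinity>(x,y)\<in>UNIV. b x y * \<bar>f x - f y\<bar> powr p)
     + (\<Sum>\<^sub>\<infinity>x\<in>UNIV. c x * \<bar>f x\<bar> powr p)"

definition p_parabolic :: "('a \<Rightarrow> 'a \<Rightarrow> real) \<Rightarrow> ('a \<Rightarrow> real) \<Rightarrow> real \<Rightarrow> bool" where
  "p_parabolic b c p \<longleftrightarrow>
     (\<forall>K. finite K \<longrightarrow>
        Inf {energy b c p \<phi> | \<phi>. finite {x. \<phi> x \<noteq> 0} \<and> (\<forall>x\<in>K. 1 \<le> \<phi> x)} = 0)"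

definition edge_boundary :: "('a \<Rightarrow> 'a \<Rightarrow> real) \<Rightarrow> 'a set \<Rightarrow> 'a set" where
  "edge_boundary b V = {y. y \<notin> V \<and> (\<exists>z\<in>V. 0 < b y z)}"


definition Fp :: "('a \<Rightarrow> 'a \<Rightarrow> real) \<Rightarrow> real \<Rightarrow> 'a set \<Rightarrow> ('a \<Rightarrow> real) set" where
  "Fp b p V = {f. \<forall>x\<in>V. (\<lambda>y. b x y * \<bar>f x - f y\<bar> powr (p - 1)) summable_on UNIV}"

definition p_laplacian :: "('a \<Rightarrow> 'a \<Rightarrow> real) \<Rightarrow> ('a \<Rightarrow> real) \<Rightarrow> real \<Rightarrow> ('a \<Rightarrow> real) \<Rightarrow> 'a \<Rightarrow> real" where
  "p_laplacian b m p f x = (1 / m x) * (\<Sum>\<^sub>\<infinity>y\<in>UNIV. b x y * \<bar>f x - f y\<bar> powr (p - 2) * (f x - f y))"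

end

theory Submission
  imports Defs
begin

text \<open>
  The proof rests on the capacitary potentials of a finite set \<open>K\<close> in a finite set \<open>D \<supseteq> K\<close>:
  functions with values in \<open>[0, 1]\<close> that are \<open>1\<close> on \<open>K\<close>, vanish off \<open>D\<close> and are \<open>p\<close>-harmonic
  on \<open>D - K\<close>. They exist by monotone relaxation, they minimise the energy among finitely
  supported functions that are at least \<open>1\<close> on \<open>K\<close>, and by the comparison principle they
  increase with \<open>D\<close>.

  (i) \<open>\<Longrightarrow>\<close> (ii): let \<open>S\<close> and \<open>M\<close> be the suprema of \<open>u\<close> over \<open>V \<union> \<partial>V\<close> and over \<open>\<partial>V\<close>,
  and let \<open>x0 \<in> V\<close>, \<open>z \<in> \<partial>V\<close>. By parabolicity the potential \<open>f\<close> of \<open>{z}\<close> in a suitable \<open>D\<close>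
  has arbitrarily small energy, and since small energy forces small increments along a path
  from \<open>z\<close> to \<open>x0\<close>, \<open>f x0\<close> is close to \<open>1\<close>. Comparing \<open>u\<close> with the \<open>p\<close>-harmonic function
  \<open>M + (S - M) * (1 - f)\<close> on \<open>V \<inter> D\<close> gives \<open>u x0 \<le> M + (S - M) * (1 - f x0)\<close>, hence \<open>u x0 \<le> M\<close>.

  (ii) \<open>\<Longrightarrow>\<close> (i): the potentials of \<open>K\<close> in a finite exhaustion of the vertex set increase to a
  function \<open>f\<close> that is \<open>1\<close> on \<open>K\<close> and \<open>p\<close>-harmonic off \<open>K\<close>. Applying (ii) to \<open>- f\<close> on the
  complement of \<open>K\<close> shows \<open>f = 1\<close>, so the energies of the potentials, which are the sums over
  \<open>K\<close> of their \<open>p\<close>-Laplacians (times \<open>m\<close>), tend to \<open>0\<close>.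
\<close>

text \<open>\<open>sgn_powr a (p - 1)\<close> is the signed power \<open>|a|^(p-2) a\<close> of the paper.\<close>
definition sgn_powr :: "real \<Rightarrow> real \<Rightarrow> real" where
  "sgn_powr t q = sgn t * \<bar>t\<bar> powr q"

lemma sgn_powr_0 [simp]: "sgn_powr 0 q = 0"
  by (simp add: sgn_powr_def)

lemma sgn_powr_minus: "sgn_powr (- t) q = - sgn_powr t q"
  by (simp add: sgn_powr_def)

lemma sgn_powr_diff_commute: "sgn_powr (a - c) q = - sgn_powr (c - a) q"
  by (metis minus_diff_eq sgn_powr_minus)

lemma abs_sgn_powr: "\<bar>sgn_powr t q\<bar> = \<bar>t\<bar> powr q"
  by (simp add: sgn_powr_def abs_mult abs_sgn_eq)

lemma sgn_powr_of_nonneg: "0 \<le> t \<Longrightarrow> sgn_powr t q = t powr q"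
  by (cases "t = 0") (auto simp: sgn_powr_def)

lemma abs_powr_mult_eq_sgn_powr: "\<bar>t\<bar> powr (q - 1) * t = sgn_powr t q"
proof (cases "t = 0")
  case False
  have "\<bar>t\<bar> powr q = \<bar>t\<bar> powr (q - 1) * \<bar>t\<bar>"
    using powr_add[of "\<bar>t\<bar>" "q - 1" 1] False by simp
  then show ?thesis
    by (auto simp: sgn_powr_def sgn_if)
qed simp

lemma sgn_powr_mult_self: "sgn_powr t q * t = \<bar>t\<bar> powr (q + 1)"
  using powr_add[of "\<bar>t\<bar>" q 1]
  by (auto simp: sgn_powr_def mult.assoc sgn_if)

lemma sgn_powr_mult: "0 \<le> c \<Longrightarrow> sgn_powr (c * t) q = c powr q * sgn_powr t q"
  by (cases "c = 0") (simp_all add: sgn_powr_def abs_mult powr_mult sgn_mult)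

lemma sgn_powr_strict_mono:
  assumes "0 < q" "s < t"
  shows "sgn_powr s q < sgn_powr t q"
proof -
  consider "0 \<le> s" | "s < 0" "0 \<le> t" | "t < 0" using assms by linarith
  then show ?thesis
  proof cases
    case 1
    then show ?thesis using assms by (simp add: sgn_powr_of_nonneg powr_less_mono2)
  next
    case 2
    have "0 < (- s) powr q" "0 \<le> t powr q" using 2 by simp_all
    moreover have "sgn_powr s q = - ((- s) powr q)" "sgn_powr t q = t powr q"
      using sgn_powr_minus[of "- s" q] 2 by (simp_all add: sgn_powr_of_nonneg)
    ultimately show ?thesis by linarith
  next
    case 3
    then have "(- t) powr q < (- s) powr q" using assms by (simp add: powr_less_mono2)
    then show ?thesis
      using sgn_powr_minus[of "- s" q] sgn_powr_minus[of "- t" q] 3 assms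
      by (simp add: sgn_powr_of_nonneg)
  qed
qed

lemma sgn_powr_le_iff:
  assumes "0 < q"
  shows "sgn_powr s q \<le> sgn_powr t q \<longleftrightarrow> s \<le> t"
  using sgn_powr_strict_mono[OF assms, of s t] sgn_powr_strict_mono[OF assms, of t s]
  by (metis linorder_not_le order_le_less)

lemma sgn_powr_mono: "0 < q \<Longrightarrow> s \<le> t \<Longrightarrow> sgn_powr s q \<le> sgn_powr t q"
  by (simp add: sgn_powr_le_iff)

lemma sgn_powr_nonneg_iff: "0 < q \<Longrightarrow> 0 \<le> sgn_powr t q \<longleftrightarrow> 0 \<le> t"
  using sgn_powr_le_iff[of q 0 t] by simp

lemma sgn_powr_nonpos_iff: "0 < q \<Longrightarrow> sgn_powr t q \<le> 0 \<longleftrightarrow> t \<le> 0"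
  using sgn_powr_le_iff[of q t 0] by simp

lemma isCont_sgn_powr:
  assumes "0 < q"
  shows "isCont (\<lambda>t. sgn_powr t q) t"
proof (cases "t = 0")
  case True
  have "((\<lambda>s. \<bar>s\<bar> powr q) \<longlongrightarrow> \<bar>0\<bar> powr q) (at 0)"
    using assms by (intro tendsto_powr' tendsto_intros) auto
  then have "((\<lambda>s. \<bar>sgn_powr s q\<bar>) \<longlongrightarrow> 0) (at 0)"
    using assms by (simp add: abs_sgn_powr)
  then have "((\<lambda>s. sgn_powr s q) \<longlongrightarrow> 0) (at 0)"
    by (rule tendsto_rabs_zero_cancel)
  then show ?thesis using True by (simp add: isCont_def)
next
  case False
  have "((\<lambda>s. \<bar>s\<bar> powr (q - 1) * s) \<longlongrightarrow> \<bar>t\<bar> powr (q - 1) * t) (at t)"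
    using False by (intro tendsto_intros tendsto_powr') auto
  then show ?thesis by (simp add: isCont_def abs_powr_mult_eq_sgn_powr)
qed

text \<open>Tangent line inequality for the convex function \<open>\<bar>t\<bar> powr p\<close>, whose derivative is
  \<open>p * sgn_powr t (p - 1)\<close>.\<close>
lemma abs_powr_ge_tangent:
  assumes "1 < p"
  shows "\<bar>a\<bar> powr p + p * sgn_powr a (p - 1) * (c - a) \<le> \<bar>c\<bar> powr p"
proof -
  define q where "q = p / (p - 1)"
  have "\<bar>a\<bar> powr (p - 1) * \<bar>c\<bar> \<le> (\<bar>a\<bar> powr (p - 1)) powr q / q + \<bar>c\<bar> powr p / p"
    by (rule Youngs_inequality) (use assms in \<open>auto simp: q_def field_simps\<close>)
  also have "(\<bar>a\<bar> powr (p - 1)) powr q = \<bar>a\<bar> powr p"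
    using assms by (simp add: powr_powr q_def)
  finally have young: "p * (\<bar>a\<bar> powr (p - 1) * \<bar>c\<bar>) \<le> (p - 1) * \<bar>a\<bar> powr p + \<bar>c\<bar> powr p"
    using assms by (simp add: q_def field_simps)
  have "sgn_powr a (p - 1) * c \<le> \<bar>a\<bar> powr (p - 1) * \<bar>c\<bar>"
    by (metis abs_ge_self abs_mult abs_sgn_powr)
  then have "p * (sgn_powr a (p - 1) * c) \<le> p * (\<bar>a\<bar> powr (p - 1) * \<bar>c\<bar>)"
    using assms by (intro mult_left_mono) auto
  also note young
  finally have "p * (sgn_powr a (p - 1) * c) \<le> (p - 1) * \<bar>a\<bar> powr p + \<bar>c\<bar> powr p" .
  moreover have "sgn_powr a (p - 1) * a = \<bar>a\<bar> powr p"
    by (simp add: sgn_powr_mult_self)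
  ultimately show ?thesis by (simp add: algebra_simps)
qed

lemma infsum_strict_mono:
  fixes f g :: "'a \<Rightarrow> real"
  assumes "f summable_on A" "g summable_on A" "\<And>y. y \<in> A \<Longrightarrow> f y \<le> g y" "x \<in> A" "f x < g x"
  shows "infsum f A < infsum g A"
  using has_sum_strict_mono[OF has_sum_infsum[OF assms(1)] has_sum_infsum[OF assms(2)]] assms(3-)
  by blast

lemma infsum_eq_integral_count_space:
  fixes g :: "'a \<Rightarrow> real"
  assumes "\<beta> summable_on UNIV" "\<And>y. \<bar>g y\<bar> \<le> \<beta> y"
  shows "integrable (count_space UNIV) g" "infsum g UNIV = integral\<^sup>L (count_space UNIV) g"
proof -
  have "(\<lambda>y. norm (g y)) summable_on UNIV"
    by (rule summable_on_comparison_test[OF assms(1)]) (use assms(2) in auto)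
  then have "Infinite_Set_Sum.abs_summable_on g UNIV"
    using abs_summable_equivalent by blast
  then show "integrable (count_space UNIV) g" "infsum g UNIV = integral\<^sup>L (count_space UNIV) g"
    using infsetsum_infsum[of g UNIV]
    unfolding infsetsum_def Infinite_Set_Sum.abs_summable_on_def by auto
qed

lemma tendsto_infsum_dominated:
  fixes a :: "nat \<Rightarrow> 'a \<Rightarrow> real"
  assumes "\<beta> summable_on UNIV" "\<And>n y. \<bar>a n y\<bar> \<le> \<beta> y" "\<And>y. (\<lambda>n. a n y) \<longlonglongrightarrow> a' y"
  shows "(\<lambda>n. infsum (a n) UNIV) \<longlonglongrightarrow> infsum a' UNIV"
proof -
  have a'_le: "\<bar>a' y\<bar> \<le> \<beta> y" for y
    using LIMSEQ_le_const2[OF tendsto_rabs[OF assms(3)[of y]], of "\<beta> y"] assms(2) by auto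
  have "\<bar>\<beta> y\<bar> \<le> \<beta> y" for y
    using assms(2)[of 0 y] by auto
  then have "integrable (count_space UNIV) \<beta>"
    using infsum_eq_integral_count_space(1)[OF assms(1)] by blast
  then have "(\<lambda>n. integral\<^sup>L (count_space UNIV) (a n)) \<longlonglongrightarrow> integral\<^sup>L (count_space UNIV) a'"
    by (intro integral_dominated_convergence[where w = \<beta>]) (use assms in auto)
  then show ?thesis
    using infsum_eq_integral_count_space(2)[OF assms(1)] assms(2) a'_le by simp
qed

lemma rtranclp_exit_step:
  assumes "R\<^sup>*\<^sup>* x y" "P x" "\<not> P y"
  shows "\<exists>u v. R u v \<and> P u \<and> \<not> P v"
  using assms by (induction rule: rtranclp_induct) auto

lemma Inf_nonneg_eq_0_iff:
  fixes X :: "real set"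
  assumes "X \<noteq> {}" "\<And>x. x \<in> X \<Longrightarrow> 0 \<le> x"
  shows "Inf X = 0 \<longleftrightarrow> (\<forall>\<epsilon>>0. \<exists>x\<in>X. x < \<epsilon>)"
proof
  assume "Inf X = 0"
  then show "\<forall>\<epsilon>>0. \<exists>x\<in>X. x < \<epsilon>"
    using cInf_lessD[OF assms(1)] by auto
next
  assume small: "\<forall>\<epsilon>>0. \<exists>x\<in>X. x < \<epsilon>"
  have "bdd_below X"
    using assms(2) by (rule bdd_belowI)
  then have "\<not> 0 < Inf X"
    using small cInf_lower[of _ X] by (meson not_le)
  moreover have "0 \<le> Inf X"
    using assms by (intro cInf_greatest) auto
  ultimately show "Inf X = 0"
    by simp
qed

lemma incseq_unit_functions_limit:
  fixes V :: "nat \<Rightarrow> 'a \<Rightarrow> real"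
  assumes "\<And>k y. V k y \<le> V (Suc k) y" "\<And>k. range (V k) \<subseteq> {0..1}"
  obtains v where "\<And>y. (\<lambda>k. V k y) \<longlonglongrightarrow> v y" "range v \<subseteq> {0..1}" "\<And>k y. V k y \<le> v y"
proof -
  have "\<exists>L. (\<lambda>k. V k y) \<longlonglongrightarrow> L \<and> (\<forall>k. V k y \<le> L)" for y
  proof -
    have "incseq (\<lambda>k. V k y)"
      using assms(1) by (rule incseq_SucI)
    moreover have "\<forall>k. V k y \<le> 1"
      using assms(2) by (auto simp: image_subset_iff)
    ultimately show ?thesis
      by (rule incseq_convergent) blast
  qed
  then obtain v where lim: "\<And>y. (\<lambda>k. V k y) \<longlonglongrightarrow> v y" and ge: "\<And>k y. V k y \<le> v y"
    by metis
  have "v y \<in> {0..1}" for y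
  proof -
    have "0 \<le> V 0 y" "V k y \<le> 1" for k
      using assms(2) by (auto simp: image_subset_iff)
    then show ?thesis
      using ge[of 0 y] LIMSEQ_le_const2[OF lim, of y 1] by auto
  qed
  then show ?thesis
    using that lim ge by blast
qed

lemma countable_exhaustion:
  assumes "countable (UNIV :: 'a set)" "finite (K :: 'a set)"
  obtains B where "\<And>n. finite (B n)" "\<And>n. K \<subseteq> B n" "\<And>n. B n \<subseteq> B (Suc n)" "\<And>x. \<exists>n. x \<in> B n"
proof -
  obtain g :: "'a \<Rightarrow> nat" where "inj g"
    using countableE[OF assms(1)] by blast
  define B where "B n = K \<union> g -` {..<n}" for n
  have "finite (B n)" for n
    unfolding B_def using assms(2) finite_vimageI[OF finite_lessThan \<open>inj g\<close>] by simp
  moreover have "x \<in> B (Suc (g x))" for x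
    by (simp add: B_def)
  moreover have "K \<subseteq> B n" "B n \<subseteq> B (Suc n)" for n
    by (auto simp: B_def)
  ultimately show ?thesis
    using that[of B] by blast
qed

locale p_graph =
  fixes b :: "'a \<Rightarrow> 'a \<Rightarrow> real" and p :: real
  assumes b_sym: "b x y = b y x"
    and b_nonneg: "0 \<le> b x y"
    and b_summable: "(\<lambda>y. b x y) summable_on UNIV"
    and p_gt_1: "1 < p"
begin

text \<open>\<open>lap f x\<close> is \<open>m x\<close> times the \<open>p\<close>-Laplacian of \<open>f\<close> at \<open>x\<close>.\<close>
definition lap :: "('a \<Rightarrow> real) \<Rightarrow> 'a \<Rightarrow> real" where
  "lap f x = (\<Sum>\<^sub>\<infinity>y. b x y * sgn_powr (f x - f y) (p - 1))"

definition out_weight :: "'a set \<Rightarrow> 'a \<Rightarrow> real" where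
  "out_weight D x = (\<Sum>\<^sub>\<infinity>y\<in>-D. b x y)"

lemma p_laplacian_nonpos_iff:
  assumes "0 < m x"
  shows "p_laplacian b m p f x \<le> 0 \<longleftrightarrow> lap f x \<le> 0"
proof -
  have "p_laplacian b m p f x = lap f x / m x"
    by (simp add: p_laplacian_def lap_def abs_powr_mult_eq_sgn_powr[of _ "p - 1", simplified] mult.assoc)
  then show ?thesis
    using assms by (simp add: divide_le_0_iff)
qed

lemma out_weight_nonneg: "0 \<le> out_weight D x"
  unfolding out_weight_def by (rule infsum_nonneg) (simp add: b_nonneg)

lemma summable_weighted_bounded:
  assumes "\<And>y. \<bar>g y\<bar> \<le> C"
  shows "(\<lambda>y. b x y * g y) summable_on UNIV"
proof -
  have "(\<lambda>y. b x y * C) summable_on UNIV"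
    using b_summable by (rule summable_on_cmult_left)
  moreover have "norm (b x y * g y) \<le> b x y * C" for y
    using assms[of y] b_nonneg[of x y] by (simp add: abs_mult mult_left_mono)
  ultimately have "(\<lambda>y. norm (b x y * g y)) summable_on UNIV"
    by (rule summable_on_comparison_test) auto
  then show ?thesis
    using summable_on_iff_abs_summable_on_real by blast
qed

lemma infsum_weighted_eventually_const:
  assumes "finite D" "\<And>y. y \<notin> D \<Longrightarrow> h y = c"
  shows "(\<lambda>y. b x y * h y) summable_on UNIV"
    and "(\<Sum>\<^sub>\<infinity>y. b x y * h y) = (\<Sum>y\<in>D. b x y * h y) + out_weight D x * c"
proof -
  have fin: "(\<lambda>y. b x y * h y) summable_on D"
    using assms(1) by simp
  have "(\<lambda>y. b x y * c) summable_on - D"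
    using summable_on_subset_banach[OF b_summable] by (intro summable_on_cmult_left) auto
  then have rest: "(\<lambda>y. b x y * h y) summable_on - D"
    by (rule summable_on_cong[THEN iffD1, rotated]) (use assms(2) in auto)
  show "(\<lambda>y. b x y * h y) summable_on UNIV"
    using summable_on_union[OF fin rest] by (simp add: Compl_partition)
  have "(\<Sum>\<^sub>\<infinity>y. b x y * h y) = (\<Sum>\<^sub>\<infinity>y\<in>D. b x y * h y) + (\<Sum>\<^sub>\<infinity>y\<in>-D. b x y * h y)"
    using infsum_Un_disjoint[OF fin rest] by (simp add: Compl_partition)
  also have "(\<Sum>\<^sub>\<infinity>y\<in>-D. b x y * h y) = (\<Sum>\<^sub>\<infinity>y\<in>-D. b x y * c)"
    by (rule infsum_cong) (use assms(2) in auto)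
  finally show "(\<Sum>\<^sub>\<infinity>y. b x y * h y) = (\<Sum>y\<in>D. b x y * h y) + out_weight D x * c"
    using assms(1) by (simp add: out_weight_def infsum_cmult_left')
qed

lemma lap_finite_support:
  assumes "finite D" "{y. f y \<noteq> 0} \<subseteq> D"
  shows "lap f x = (\<Sum>y\<in>D. b x y * sgn_powr (f x - f y) (p - 1)) + out_weight D x * sgn_powr (f x) (p - 1)"
proof -
  have "f y = 0" if "y \<notin> D" for y
    using assms(2) that by blast
  then show ?thesis
    unfolding lap_def by (intro infsum_weighted_eventually_const(2)[OF assms(1)]) simp
qed

lemma summable_lap_terms_bounded:
  assumes "\<And>y. \<bar>f y\<bar> \<le> C"
  shows "(\<lambda>y. b x y * sgn_powr (s - f y) (p - 1)) summable_on UNIV"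
proof (rule summable_weighted_bounded)
  fix y
  have "\<bar>s - f y\<bar> \<le> \<bar>s\<bar> + C"
    using assms[of y] by linarith
  then show "\<bar>sgn_powr (s - f y) (p - 1)\<bar> \<le> (\<bar>s\<bar> + C) powr (p - 1)"
    unfolding abs_sgn_powr using p_gt_1 by (intro powr_mono2) auto
qed

lemma summable_lap_terms_Fp:
  assumes "f \<in> Fp b p V" "x \<in> V"
  shows "(\<lambda>y. b x y * sgn_powr (f x - f y) (p - 1)) summable_on UNIV"
proof -
  have "(\<lambda>y. norm (b x y * sgn_powr (f x - f y) (p - 1))) = (\<lambda>y. b x y * \<bar>f x - f y\<bar> powr (p - 1))"
    by (auto simp: abs_mult abs_sgn_powr b_nonneg)
  then show ?thesis
    using assms summable_on_iff_abs_summable_on_real unfolding Fp_def by fastforce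
qed

lemma lap_nonpos_at_min:
  assumes "\<And>y. f x \<le> f y"
  shows "lap f x \<le> 0"
proof -
  have "0 \<le> (\<Sum>\<^sub>\<infinity>y. - (b x y * sgn_powr (f x - f y) (p - 1)))"
    using assms p_gt_1 by (intro infsum_nonneg) (simp add: b_nonneg sgn_powr_nonpos_iff mult_nonneg_nonpos)
  then show ?thesis
    by (simp add: lap_def infsum_uminus)
qed

lemma lap_nonneg_at_max:
  assumes "\<And>y. f y \<le> f x"
  shows "0 \<le> lap f x"
  unfolding lap_def using assms p_gt_1 by (intro infsum_nonneg) (simp add: b_nonneg sgn_powr_nonneg_iff)

lemma lap_uminus: "lap (\<lambda>y. - f y) x = - lap f x"
proof -
  have "b x y * sgn_powr (- f x - - f y) (p - 1) = - (b x y * sgn_powr (f x - f y) (p - 1))" for y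
    using sgn_powr_minus[of "f x - f y" "p - 1"] by simp
  then show ?thesis
    by (simp add: lap_def infsum_uminus)
qed

lemma lap_affine:
  assumes "0 \<le> c"
  shows "lap (\<lambda>y. M + c * (1 - f y)) x = - (c powr (p - 1)) * lap f x"
proof -
  have "b x y * sgn_powr ((M + c * (1 - f x)) - (M + c * (1 - f y))) (p - 1)
      = - (c powr (p - 1)) * (b x y * sgn_powr (f x - f y) (p - 1))" for y
  proof -
    have "(M + c * (1 - f x)) - (M + c * (1 - f y)) = c * (f y - f x)"
      by (simp add: algebra_simps)
    then show ?thesis
      using sgn_powr_mult[OF assms, of "f y - f x" "p - 1"] sgn_powr_diff_commute[of "f y" "f x"]
      by simp
  qed
  then show ?thesis
    unfolding lap_def by (simp only: infsum_cmult_right')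
qed

lemma energy_nonneg: "0 \<le> energy b (\<lambda>_. 0) p f"
  unfolding energy_def by (auto intro!: infsum_nonneg simp: b_nonneg)

lemma summable_energy_terms:
  assumes "finite D" "{y. f y \<noteq> 0} \<subseteq> D"
  shows "(\<lambda>(x, y). b x y * \<bar>f x - f y\<bar> powr p) summable_on UNIV"
proof -
  have f0: "f y = 0" if "y \<notin> D" for y
    using assms(2) that by blast
  define F where "F = (\<lambda>(x, y). b x y * \<bar>f x - f y\<bar> powr p)"
  have "(\<lambda>y. b x y * \<bar>f x - f y\<bar> powr p) summable_on UNIV" for x
    by (rule infsum_weighted_eventually_const(1)[OF assms(1), where c = "\<bar>f x\<bar> powr p"]) (simp add: f0)
  then have "(\<lambda>y. F (x, y)) summable_on UNIV" for x
    by (simp add: F_def)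
  then have "F summable_on D \<times> UNIV"
    by (intro summable_on_SigmaI[where g = "\<lambda>x. \<Sum>\<^sub>\<infinity>y. F (x, y)"]) (auto simp: F_def b_nonneg assms(1))
  moreover have "(\<lambda>(x, y). F (y, x)) = F"
    by (auto simp: F_def b_sym abs_minus_commute)
  ultimately have "F summable_on UNIV \<times> D"
    by (subst summable_on_swap) simp
  then have "F summable_on D \<times> UNIV \<union> UNIV \<times> D"
    using \<open>F summable_on D \<times> UNIV\<close> by (rule summable_on_union[rotated])
  then show ?thesis
    unfolding F_def by (rule summable_on_cong_neutral[THEN iffD1, rotated -1]) (auto, metis f0)
qed

lemma energy_finite_support:
  assumes "finite D" "{y. f y \<noteq> 0} \<subseteq> D"
  shows "energy b (\<lambda>_. 0) p f
    = 1/2 * (\<Sum>x\<in>D. \<Sum>y\<in>D. b x y * \<bar>f x - f y\<bar> powr p) + (\<Sum>x\<in>D. out_weight D x * \<bar>f x\<bar> powr p)"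
proof -
  have f0: "f y = 0" if "y \<notin> D" for y
    using assms(2) that by blast
  define F where "F x y = b x y * \<bar>f x - f y\<bar> powr p" for x y
  have "(\<lambda>(x, y). F x y) summable_on UNIV"
    unfolding F_def by (rule summable_energy_terms) (use assms in auto)
  then have F_summable: "(\<lambda>(x, y). F x y) summable_on A" for A
    by (rule summable_on_subset_banach) simp
  have row: "(\<Sum>\<^sub>\<infinity>y. F x y) = (\<Sum>y\<in>D. F x y) + out_weight D x * \<bar>f x\<bar> powr p" for x
    unfolding F_def using f0 by (intro infsum_weighted_eventually_const(2)[OF assms(1)]) auto
  have "infsum (\<lambda>(x, y). F x y) UNIV
      = infsum (\<lambda>(x, y). F x y) (D \<times> UNIV) + infsum (\<lambda>(x, y). F x y) ((- D) \<times> UNIV)"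
    using infsum_Un_disjoint[OF F_summable F_summable, of "D \<times> UNIV" "(- D) \<times> UNIV"]
    by (auto simp flip: Sigma_Un_distrib1)
  also have "infsum (\<lambda>(x, y). F x y) (D \<times> UNIV)
      = (\<Sum>x\<in>D. (\<Sum>y\<in>D. F x y) + out_weight D x * \<bar>f x\<bar> powr p)"
    using infsum_Sigma'_banach[OF F_summable, where A = D and B = "\<lambda>_. UNIV"] assms(1) by (simp add: row)
  also have "infsum (\<lambda>(x, y). F x y) ((- D) \<times> UNIV) = (\<Sum>\<^sub>\<infinity>x\<in>- D. \<Sum>\<^sub>\<infinity>y. F x y)"
    using infsum_Sigma'_banach[OF F_summable, where A = "- D" and B = "\<lambda>_. UNIV"] by simp
  also have "\<dots> = (\<Sum>\<^sub>\<infinity>x\<in>- D. \<Sum>\<^sub>\<infinity>y\<in>D. F x y)"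
    by (intro infsum_cong infsum_cong_neutral) (auto simp: F_def f0)
  also have "\<dots> = (\<Sum>y\<in>D. \<Sum>\<^sub>\<infinity>x\<in>- D. F x y)"
    using infsum_swap_banach[OF F_summable, where A = "- D" and B = D] assms(1) by simp
  also have "\<dots> = (\<Sum>y\<in>D. out_weight D y * \<bar>f y\<bar> powr p)"
  proof (intro sum.cong refl)
    fix y
    have "(\<Sum>\<^sub>\<infinity>x\<in>- D. F x y) = (\<Sum>\<^sub>\<infinity>x\<in>- D. b y x * \<bar>f y\<bar> powr p)"
      by (intro infsum_cong) (simp add: F_def b_sym abs_minus_commute f0)
    then show "(\<Sum>\<^sub>\<infinity>x\<in>- D. F x y) = out_weight D y * \<bar>f y\<bar> powr p"
      by (simp add: out_weight_def infsum_cmult_left')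
  qed
  finally show ?thesis
    by (simp add: energy_def F_def sum.distrib)
qed

lemma edge_term_le_energy:
  assumes "finite D" "{y. f y \<noteq> 0} \<subseteq> D"
  shows "b w w' * \<bar>f w - f w'\<bar> powr p \<le> energy b (\<lambda>_. 0) p f"
proof (cases "w = w'")
  case True
  then show ?thesis using energy_nonneg by simp
next
  case False
  define F where "F = (\<lambda>(x, y). b x y * \<bar>f x - f y\<bar> powr p)"
  have "F summable_on UNIV"
    unfolding F_def by (rule summable_energy_terms) (use assms in auto)
  then have "infsum F {(w, w'), (w', w)} \<le> infsum F UNIV"
    by (intro infsum_mono_neutral) (auto simp: F_def b_nonneg)
  moreover have "infsum F {(w, w'), (w', w)} = 2 * (b w w' * \<bar>f w - f w'\<bar> powr p)"
    using False by (simp add: F_def b_sym abs_minus_commute)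
  ultimately show ?thesis
    by (simp add: energy_def F_def)
qed

lemma green_formula:
  assumes "finite D" "{y. f y \<noteq> 0} \<subseteq> D"
  shows "1/2 * (\<Sum>x\<in>D. \<Sum>y\<in>D. b x y * sgn_powr (f x - f y) (p - 1) * (g x - g y))
           + (\<Sum>x\<in>D. out_weight D x * sgn_powr (f x) (p - 1) * g x)
         = (\<Sum>x\<in>D. g x * lap f x)"
proof -
  define T where "T x y = b x y * sgn_powr (f x - f y) (p - 1)" for x y
  have antisym: "T y x = - T x y" for x y
    by (simp add: T_def b_sym sgn_powr_diff_commute[of "f y"])
  have "(\<Sum>x\<in>D. \<Sum>y\<in>D. T x y * g y) = (\<Sum>y\<in>D. \<Sum>x\<in>D. - (T y x * g y))"
    by (subst sum.swap) (intro sum.cong refl, metis antisym mult_minus_left)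
  then have "(\<Sum>x\<in>D. \<Sum>y\<in>D. T x y * (g x - g y)) = 2 * (\<Sum>x\<in>D. \<Sum>y\<in>D. T x y * g x)"
    by (simp add: right_diff_distrib sum_subtractf sum_negf)
  moreover have "g x * lap f x = (\<Sum>y\<in>D. T x y * g x) + out_weight D x * sgn_powr (f x) (p - 1) * g x" for x
  proof -
    have "g x * lap f x = (\<Sum>y\<in>D. T x y) * g x + out_weight D x * sgn_powr (f x) (p - 1) * g x"
      using lap_finite_support[OF assms, of x] by (simp add: T_def algebra_simps)
    then show ?thesis
      by (simp add: sum_distrib_right)
  qed
  ultimately show ?thesis
    by (simp add: T_def sum.distrib)
qed

lemma energy_eq_sum_lap:
  assumes "finite D" "{y. f y \<noteq> 0} \<subseteq> D"
  shows "energy b (\<lambda>_. 0) p f = (\<Sum>x\<in>D. f x * lap f x)"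
  using green_formula[OF assms, where g = f] energy_finite_support[OF assms]
  by (simp add: mult.assoc sgn_powr_mult_self)

text \<open>The energy is convex, with gradient \<open>p * lap f\<close> at \<open>f\<close>.\<close>
lemma energy_ge_linearization:
  assumes "finite D" "{y. f y \<noteq> 0} \<subseteq> D" "{y. g y \<noteq> 0} \<subseteq> D"
  shows "energy b (\<lambda>_. 0) p f + p * (\<Sum>x\<in>D. (g x - f x) * lap f x) \<le> energy b (\<lambda>_. 0) p g"
proof -
  let ?s = "\<lambda>t. sgn_powr t (p - 1)"
  have pair: "b x y * (\<bar>f x - f y\<bar> powr p + p * ?s (f x - f y) * ((g x - g y) - (f x - f y)))
      = b x y * \<bar>f x - f y\<bar> powr p + p * (b x y * ?s (f x - f y) * ((g x - f x) - (g y - f y)))" for x y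
    by (simp add: algebra_simps)
  have single: "out_weight D x * (\<bar>f x\<bar> powr p + p * ?s (f x) * (g x - f x))
      = out_weight D x * \<bar>f x\<bar> powr p + p * (out_weight D x * ?s (f x) * (g x - f x))" for x
    by (simp add: algebra_simps)
  have "energy b (\<lambda>_. 0) p f + p * (\<Sum>x\<in>D. (g x - f x) * lap f x)
      = 1/2 * (\<Sum>x\<in>D. \<Sum>y\<in>D. b x y * (\<bar>f x - f y\<bar> powr p + p * ?s (f x - f y) * ((g x - g y) - (f x - f y))))
        + (\<Sum>x\<in>D. out_weight D x * (\<bar>f x\<bar> powr p + p * ?s (f x) * (g x - f x)))"
    unfolding pair single energy_finite_support[OF assms(1,2)]
      green_formula[OF assms(1,2), where g = "\<lambda>x. g x - f x", symmetric]
    by (simp only: sum.distrib sum_distrib_left[symmetric]) (simp add: algebra_simps)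
  also have "\<dots> \<le> 1/2 * (\<Sum>x\<in>D. \<Sum>y\<in>D. b x y * \<bar>g x - g y\<bar> powr p)
      + (\<Sum>x\<in>D. out_weight D x * \<bar>g x\<bar> powr p)"
    using p_gt_1
    by (intro add_mono mult_left_mono sum_mono abs_powr_ge_tangent) (auto simp: b_nonneg out_weight_nonneg)
  also have "\<dots> = energy b (\<lambda>_. 0) p g"
    using energy_finite_support[OF assms(1,3)] by simp
  finally show ?thesis .
qed

lemma small_edge_terms_imp_close:
  assumes "(\<lambda>u v. 0 < b u v)\<^sup>*\<^sup>* x y" "0 < \<eta>"
  shows "\<exists>\<delta>>0. \<forall>f. (\<forall>w w'. b w w' * \<bar>f w - f w'\<bar> powr p \<le> \<delta>) \<longrightarrow> \<bar>f x - f y\<bar> \<le> \<eta>"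
  using assms
proof (induction arbitrary: \<eta> rule: rtranclp_induct)
  case base
  then show ?case by (auto intro: exI[of _ 1])
next
  case (step y z)
  obtain \<delta> where "0 < \<delta>"
    and \<delta>: "\<And>f. \<forall>w w'. b w w' * \<bar>f w - f w'\<bar> powr p \<le> \<delta> \<Longrightarrow> \<bar>f x - f y\<bar> \<le> \<eta> / 2"
    using step.IH[of "\<eta> / 2"] step.prems by auto
  define \<delta>' where "\<delta>' = min \<delta> (b y z * (\<eta> / 2) powr p)"
  have "0 < \<delta>'"
    using \<open>0 < \<delta>\<close> step.hyps(2) step.prems by (simp add: \<delta>'_def)
  moreover have "\<bar>f x - f z\<bar> \<le> \<eta>" if small: "\<forall>w w'. b w w' * \<bar>f w - f w'\<bar> powr p \<le> \<delta>'" for f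
  proof -
    have "\<bar>f x - f y\<bar> \<le> \<eta> / 2"
      using small by (intro \<delta>) (auto simp: \<delta>'_def intro: order_trans)
    moreover have "b y z * \<bar>f y - f z\<bar> powr p \<le> b y z * (\<eta> / 2) powr p"
      using small[rule_format, of y z] by (simp add: \<delta>'_def)
    then have "\<bar>f y - f z\<bar> powr p \<le> (\<eta> / 2) powr p"
      using step.hyps(2) by simp
    then have "\<bar>f y - f z\<bar> \<le> \<eta> / 2"
      using powr_less_mono2[of p "\<eta> / 2" "\<bar>f y - f z\<bar>"] p_gt_1 step.prems by force
    ultimately show ?thesis by linarith
  qed
  ultimately show ?case by blast
qed

definition lap_at :: "'a \<Rightarrow> real \<Rightarrow> ('a \<Rightarrow> real) \<Rightarrow> real" where
  "lap_at x s v = (\<Sum>\<^sub>\<infinity>y. b x y * sgn_powr (s - v y) (p - 1))"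

lemma lap_eq_lap_at: "lap v x = lap_at x (v x) v"
  by (simp add: lap_def lap_at_def)

lemma summable_lap_at_terms:
  assumes "range v \<subseteq> {0..1}"
  shows "(\<lambda>y. b x y * sgn_powr (s - v y) (p - 1)) summable_on UNIV"
  using assms by (intro summable_lap_terms_bounded[where C = 1]) (auto simp: image_subset_iff)

lemma tendsto_lap_at:
  assumes "s \<longlonglongrightarrow> t" "\<And>y. (\<lambda>n. v n y) \<longlonglongrightarrow> w y"
    and "\<And>n. s n \<in> {0..1}" "\<And>n. range (v n) \<subseteq> {0..1}"
  shows "(\<lambda>n. lap_at x (s n) (v n)) \<longlonglongrightarrow> lap_at x t w"
  unfolding lap_at_def
proof (rule tendsto_infsum_dominated[OF b_summable])
  fix n y
  have "v n y \<in> {0..1}"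
    using assms(4)[of n] by blast
  then have "\<bar>s n - v n y\<bar> \<le> 1"
    using assms(3)[of n] by auto
  then have "\<bar>sgn_powr (s n - v n y) (p - 1)\<bar> \<le> 1"
    unfolding abs_sgn_powr using p_gt_1 by (intro powr_le1) auto
  then show "\<bar>b x y * sgn_powr (s n - v n y) (p - 1)\<bar> \<le> b x y"
    using b_nonneg[of x y] by (simp add: abs_mult mult_left_le)
next
  fix y
  show "(\<lambda>n. b x y * sgn_powr (s n - v n y) (p - 1)) \<longlonglongrightarrow> b x y * sgn_powr (t - w y) (p - 1)"
    using p_gt_1 by (intro tendsto_intros isCont_tendsto_compose[OF isCont_sgn_powr] assms(1,2)) auto
qed

lemma continuous_on_lap_at:
  assumes "range v \<subseteq> {0..1}"
  shows "continuous_on {0..1} (\<lambda>s. lap_at x s v)"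
  using assms by (intro continuous_on_sequentiallyI tendsto_lap_at) auto

lemma lap_at_0_le_1:
  assumes "range v \<subseteq> {0..1}"
  shows "lap_at x 0 v \<le> 0" "0 \<le> lap_at x 1 v"
proof -
  have "0 \<le> (\<Sum>\<^sub>\<infinity>y. - (b x y * sgn_powr (0 - v y) (p - 1)))"
    using assms p_gt_1
    by (intro infsum_nonneg) (auto simp: b_nonneg sgn_powr_nonpos_iff mult_nonneg_nonpos image_subset_iff)
  then show "lap_at x 0 v \<le> 0"
    by (simp add: lap_at_def infsum_uminus)
  show "0 \<le> lap_at x 1 v"
    unfolding lap_at_def using assms p_gt_1
    by (intro infsum_nonneg) (auto simp: b_nonneg sgn_powr_nonneg_iff image_subset_iff)
qed

lemma lap_at_antimono:
  assumes "range v \<subseteq> {0..1}" "range w \<subseteq> {0..1}" "\<And>y. v y \<le> w y"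
  shows "lap_at x s w \<le> lap_at x s v"
  unfolding lap_at_def using assms p_gt_1
  by (intro infsum_mono summable_lap_at_terms mult_left_mono sgn_powr_mono) (auto simp: b_nonneg)

lemma p_parabolic_iff_small_energy:
  "p_parabolic b (\<lambda>_. 0) p \<longleftrightarrow>
     (\<forall>K. finite K \<longrightarrow> (\<forall>\<epsilon>>0. \<exists>\<phi>. finite {x. \<phi> x \<noteq> 0} \<and> (\<forall>x\<in>K. 1 \<le> \<phi> x) \<and>
        energy b (\<lambda>_. 0) p \<phi> < \<epsilon>))"
proof -
  let ?S = "\<lambda>K. {energy b (\<lambda>_. 0) p \<phi> | \<phi>. finite {x. \<phi> x \<noteq> 0} \<and> (\<forall>x\<in>K. 1 \<le> \<phi> x)}"
  have "Inf (?S K) = 0 \<longleftrightarrow>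
      (\<forall>\<epsilon>>0. \<exists>\<phi>. finite {x. \<phi> x \<noteq> 0} \<and> (\<forall>x\<in>K. 1 \<le> \<phi> x) \<and> energy b (\<lambda>_. 0) p \<phi> < \<epsilon>)"
    if "finite K" for K
  proof -
    have "finite {x. (if x \<in> K then 1 else 0 :: real) \<noteq> 0}"
      using that by simp
    then have "energy b (\<lambda>_. 0) p (\<lambda>x. if x \<in> K then 1 else 0) \<in> ?S K"
      by fastforce
    then have "?S K \<noteq> {}"
      by blast
    moreover have "0 \<le> e" if "e \<in> ?S K" for e
      using that energy_nonneg by blast
    ultimately have "Inf (?S K) = 0 \<longleftrightarrow> (\<forall>\<epsilon>>0. \<exists>e\<in>?S K. e < \<epsilon>)"
      by (rule Inf_nonneg_eq_0_iff)
    then show ?thesis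
      by blast
  qed
  then show ?thesis
    unfolding p_parabolic_def by blast
qed

end

locale connected_p_graph = p_graph +
  assumes connected: "(\<lambda>x y. 0 < b x y)\<^sup>*\<^sup>* x y"
    and infinite_vertices: "infinite (UNIV :: 'a set)"
begin

lemma exists_edge_leaving:
  assumes "finite A" "x \<in> A"
  shows "\<exists>u v. 0 < b u v \<and> u \<in> A \<and> v \<notin> A"
proof -
  obtain w where "w \<notin> A"
    using ex_new_if_finite[OF infinite_vertices assms(1)] by blast
  then show ?thesis
    using rtranclp_exit_step[OF connected[of x w], of "\<lambda>v. v \<in> A"] assms(2) by blast
qed

lemma has_neighbour: "\<exists>y. 0 < b x y"
  using exists_edge_leaving[of "{x}" x] by auto

text \<open>Each term of \<open>lap u x\<close> dominates the corresponding term of \<open>lap h x\<close>, strictly at a neighbour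
  where the maximum of \<open>u - h\<close> is not attained.\<close>
lemma lap_le_imp_max_at_neighbours:
  assumes "(\<lambda>y. b x y * sgn_powr (u x - u y) (p - 1)) summable_on UNIV"
    and "(\<lambda>y. b x y * sgn_powr (h x - h y) (p - 1)) summable_on UNIV"
    and "lap u x \<le> lap h x" "u x - h x = \<delta>" "\<And>y. 0 < b x y \<Longrightarrow> u y - h y \<le> \<delta>"
    and "0 < b x y"
  shows "u y - h y = \<delta>"
proof (rule ccontr)
  assume "u y - h y \<noteq> \<delta>"
  then have "h x - h y < u x - u y"
    using assms(4-6) by fastforce
  then have "b x y * sgn_powr (h x - h y) (p - 1) < b x y * sgn_powr (u x - u y) (p - 1)"
    using assms(6) p_gt_1 by (intro mult_strict_left_mono sgn_powr_strict_mono) auto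
  moreover have "b x y' * sgn_powr (h x - h y') (p - 1) \<le> b x y' * sgn_powr (u x - u y') (p - 1)" for y'
  proof (cases "0 < b x y'")
    case True
    then have "h x - h y' \<le> u x - u y'"
      using assms(4,5) by fastforce
    then show ?thesis
      using p_gt_1 b_nonneg by (intro mult_left_mono sgn_powr_mono) auto
  next
    case False
    then show ?thesis
      using b_nonneg[of x y'] by simp
  qed
  ultimately have "lap h x < lap u x"
    unfolding lap_def using assms(1,2) by (intro infsum_strict_mono) auto
  then show False
    using assms(3) by simp
qed

text \<open>The set where \<open>u - h\<close> attains a positive maximum over \<open>A\<close> would be closed under taking
  neighbours, yet finite.\<close>
lemma comparison_principle:
  assumes "finite A"
    and "\<And>x. x \<in> A \<Longrightarrow> (\<lambda>y. b x y * sgn_powr (u x - u y) (p - 1)) summable_on UNIV"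
    and "\<And>x. x \<in> A \<Longrightarrow> (\<lambda>y. b x y * sgn_powr (h x - h y) (p - 1)) summable_on UNIV"
    and "\<And>x. x \<in> A \<Longrightarrow> lap u x \<le> lap h x"
    and "\<And>x y. x \<in> A \<Longrightarrow> 0 < b x y \<Longrightarrow> y \<notin> A \<Longrightarrow> u y \<le> h y"
    and "x \<in> A"
  shows "u x \<le> h x"
proof (rule ccontr)
  assume "\<not> u x \<le> h x"
  define \<delta> where "\<delta> = Max ((\<lambda>x. u x - h x) ` A)"
  have le_\<delta>: "u y - h y \<le> \<delta>" if "y \<in> A" for y
    unfolding \<delta>_def using assms(1) that by simp
  have "0 < \<delta>"
    using le_\<delta>[OF assms(6)] \<open>\<not> u x \<le> h x\<close> by simp
  define P where "P = {x \<in> A. u x - h x = \<delta>}"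
  have "\<delta> \<in> (\<lambda>x. u x - h x) ` A"
    unfolding \<delta>_def using assms(1,6) by (intro Max_in) auto
  then obtain x1 where "x1 \<in> P"
    by (auto simp: P_def)
  moreover have "finite P"
    using assms(1) by (simp add: P_def)
  ultimately obtain x' y where edge: "0 < b x' y" "x' \<in> P" "y \<notin> P"
    using exists_edge_leaving by blast
  have x'_A: "x' \<in> A" and x'_max: "u x' - h x' = \<delta>"
    using edge(2) by (auto simp: P_def)
  have nb: "u y' - h y' \<le> \<delta>" if "0 < b x' y'" for y'
  proof (cases "y' \<in> A")
    case False
    then show ?thesis
      using assms(5)[OF x'_A that] \<open>0 < \<delta>\<close> by simp
  qed (rule le_\<delta>)
  have "u y - h y = \<delta>"
    by (rule lap_le_imp_max_at_neighbours[OF assms(2-4)[OF x'_A] x'_max nb edge(1)])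
  moreover have "y \<in> A"
  proof (rule ccontr)
    assume "y \<notin> A"
    then show False
      using assms(5)[OF x'_A edge(1)] \<open>u y - h y = \<delta>\<close> \<open>0 < \<delta>\<close> by simp
  qed
  ultimately show False
    using edge(3) by (simp add: P_def)
qed

lemma lap_at_strict_mono:
  assumes "range v \<subseteq> {0..1}" "s < t"
  shows "lap_at x s v < lap_at x t v"
proof -
  obtain y where "0 < b x y"
    using has_neighbour by blast
  then show ?thesis
    unfolding lap_at_def using assms p_gt_1
    by (intro infsum_strict_mono[where x = y] summable_lap_at_terms mult_left_mono
        mult_strict_left_mono sgn_powr_mono sgn_powr_strict_mono) (auto simp: b_nonneg)
qed

text \<open>One Jacobi step for the Dirichlet problem on \<open>A\<close>: at every point of \<open>A\<close> the value is replaced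
  by one that makes the Laplacian vanish there, all other values being frozen.\<close>
definition relax :: "'a set \<Rightarrow> ('a \<Rightarrow> real) \<Rightarrow> 'a \<Rightarrow> real" where
  "relax A v x = (if x \<in> A then SOME s. s \<in> {0..1} \<and> lap_at x s v = 0 else v x)"

lemma relax_root:
  assumes "range v \<subseteq> {0..1}" "x \<in> A"
  shows "relax A v x \<in> {0..1}" "lap_at x (relax A v x) v = 0"
proof -
  have "\<exists>s. s \<in> {0..1} \<and> lap_at x s v = 0"
    using IVT'[of "\<lambda>s. lap_at x s v" 0 0 1] lap_at_0_le_1[OF assms(1)] continuous_on_lap_at[OF assms(1)]
    by auto
  from someI_ex[OF this] show "relax A v x \<in> {0..1}" "lap_at x (relax A v x) v = 0"
    using assms(2) by (simp_all add: relax_def)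
qed

lemma range_relax:
  assumes "range v \<subseteq> {0..1}"
  shows "range (relax A v) \<subseteq> {0..1}"
proof -
  have "relax A v x \<in> {0..1}" for x
    using relax_root(1)[OF assms, of x A] assms by (cases "x \<in> A") (auto simp: relax_def image_subset_iff)
  then show ?thesis by blast
qed

lemma relax_mono:
  assumes "range v \<subseteq> {0..1}" "range w \<subseteq> {0..1}" "\<And>y. v y \<le> w y"
  shows "relax A v x \<le> relax A w x"
proof (cases "x \<in> A")
  case True
  show ?thesis
  proof (rule ccontr)
    assume "\<not> relax A v x \<le> relax A w x"
    then have "lap_at x (relax A w x) v < lap_at x (relax A v x) v"
      using lap_at_strict_mono[OF assms(1)] by simp
    moreover have "lap_at x (relax A w x) w \<le> lap_at x (relax A w x) v"
      by (rule lap_at_antimono[OF assms])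
    ultimately show False
      using relax_root(2)[OF assms(1) True] relax_root(2)[OF assms(2) True] by simp
  qed
next
  case False
  then show ?thesis
    using assms(3) by (simp add: relax_def)
qed

lemma subsolution_le_relax:
  assumes "range v \<subseteq> {0..1}" "\<And>x. x \<in> A \<Longrightarrow> lap v x \<le> 0"
  shows "v x \<le> relax A v x"
proof (cases "x \<in> A")
  case True
  show ?thesis
  proof (rule ccontr)
    assume "\<not> v x \<le> relax A v x"
    then have "lap_at x (relax A v x) v < lap_at x (v x) v"
      using lap_at_strict_mono[OF assms(1)] by simp
    then show False
      using relax_root(2)[OF assms(1) True] assms(2)[OF True] by (simp add: lap_eq_lap_at)
  qed
qed (simp add: relax_def)

text \<open>The Jacobi iteration started at a subsolution increases pointwise, and its limit solves the
  Dirichlet problem.\<close>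
lemma dirichlet_solution_above_subsolution:
  assumes "range v0 \<subseteq> {0..1}" "\<And>x. x \<in> A \<Longrightarrow> lap v0 x \<le> 0"
  shows "\<exists>v. range v \<subseteq> {0..1} \<and> (\<forall>y. v0 y \<le> v y) \<and> (\<forall>y. y \<notin> A \<longrightarrow> v y = v0 y) \<and>
    (\<forall>x\<in>A. lap v x = 0)"
proof -
  define V where "V k = (relax A ^^ k) v0" for k
  have V_Suc: "V (Suc k) = relax A (V k)" for k
    by (simp add: V_def)
  have V_range: "range (V k) \<subseteq> {0..1}" for k
    by (induction k) (simp_all add: V_def assms(1) range_relax)
  have V_inc: "V k y \<le> V (Suc k) y" for k y
  proof (induction k arbitrary: y)
    case 0
    show ?case using subsolution_le_relax[OF assms] by (simp add: V_def)
  next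
    case (Suc k)
    show ?case using relax_mono[OF V_range V_range Suc.IH] by (simp add: V_Suc)
  qed
  have V_off: "V k y = v0 y" if "y \<notin> A" for k y
    using that by (induction k) (simp_all add: V_def relax_def)
  obtain v where V_lim: "\<And>y. (\<lambda>k. V k y) \<longlonglongrightarrow> v y" and "range v \<subseteq> {0..1}" "\<And>k y. V k y \<le> v y"
    using incseq_unit_functions_limit[of V, OF V_inc V_range] by blast
  moreover have "v0 y \<le> v y" for y
    using \<open>V 0 y \<le> v y\<close> by (simp add: V_def)
  moreover have "v y = v0 y" if "y \<notin> A" for y
    using V_lim[of y] V_off[OF that] by (simp add: LIMSEQ_const_iff)
  moreover have "lap v x = 0" if "x \<in> A" for x
  proof -
    have "(\<lambda>k. lap_at x (V (Suc k) x) (V k)) \<longlonglongrightarrow> lap_at x (v x) v"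
      using V_range by (intro tendsto_lap_at LIMSEQ_Suc V_lim) (auto simp: image_subset_iff)
    moreover have "lap_at x (V (Suc k) x) (V k) = 0" for k
      using relax_root(2)[OF V_range that] by (simp add: V_Suc)
    ultimately show ?thesis
      by (simp add: lap_eq_lap_at LIMSEQ_const_iff)
  qed
  ultimately show ?thesis
    by blast
qed

text \<open>The energy of such an \<open>f\<close> is the \<open>p\<close>-capacity of the condenser \<open>(K, D)\<close>.\<close>
definition capacitary_potential :: "'a set \<Rightarrow> 'a set \<Rightarrow> ('a \<Rightarrow> real) \<Rightarrow> bool" where
  "capacitary_potential K D f \<longleftrightarrow>
     range f \<subseteq> {0..1} \<and> (\<forall>x\<in>K. f x = 1) \<and> {x. f x \<noteq> 0} \<subseteq> D \<and> (\<forall>x\<in>D - K. lap f x = 0)"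

lemma capacitary_potential_exists:
  assumes "K \<subseteq> D"
  shows "\<exists>f. capacitary_potential K D f"
proof -
  define v0 where "v0 x = (if x \<in> K then 1 else 0 :: real)" for x
  have "range v0 \<subseteq> {0..1}"
    by (auto simp: v0_def)
  moreover have "lap v0 x \<le> 0" if "x \<in> D - K" for x
    using that by (intro lap_nonpos_at_min) (simp add: v0_def)
  ultimately obtain f where "range f \<subseteq> {0..1}" "\<forall>y. y \<notin> D - K \<longrightarrow> f y = v0 y" "\<forall>x\<in>D - K. lap f x = 0"
    using dirichlet_solution_above_subsolution[of v0 "D - K"] by blast
  then show ?thesis
    using assms unfolding capacitary_potential_def v0_def by (auto split: if_splits)
qed

lemma
  assumes "capacitary_potential K D f"
  shows capacitary_potential_range: "f y \<in> {0..1}"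
    and capacitary_potential_one: "x \<in> K \<Longrightarrow> f x = 1"
    and capacitary_potential_zero: "y \<notin> D \<Longrightarrow> f y = 0"
    and capacitary_potential_harmonic: "x \<in> D - K \<Longrightarrow> lap f x = 0"
    and capacitary_potential_support: "{x. f x \<noteq> 0} \<subseteq> D"
    and capacitary_potential_subset: "K \<subseteq> D"
  using assms unfolding capacitary_potential_def by (auto simp: image_subset_iff)

lemma capacitary_potential_mono:
  assumes "finite D" "D \<subseteq> D'" "capacitary_potential K D f" "capacitary_potential K D' g"
  shows "f x \<le> g x"
proof -
  note f = capacitary_potential_range[OF assms(3)] capacitary_potential_one[OF assms(3)]
    capacitary_potential_zero[OF assms(3)] capacitary_potential_harmonic[OF assms(3)]
  note g = capacitary_potential_range[OF assms(4)] capacitary_potential_one[OF assms(4)]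
    capacitary_potential_harmonic[OF assms(4)]
  have boundary: "f z \<le> g z" if "z \<notin> D - K" for z
  proof (cases "z \<in> K")
    case False
    then show ?thesis
      using that f(1,3) g(1)[of z] by simp
  qed (simp add: f(2) g(2))
  show ?thesis
  proof (cases "x \<in> D - K")
    case True
    show ?thesis
    proof (rule comparison_principle[where A = "D - K"])
      show "lap f y \<le> lap g y" if "y \<in> D - K" for y
        using that assms(2) f(4) g(3) by auto
      show "(\<lambda>z. b y z * sgn_powr (f y - f z) (p - 1)) summable_on UNIV"
        "(\<lambda>z. b y z * sgn_powr (g y - g z) (p - 1)) summable_on UNIV" for y
        using f(1) g(1) by (auto intro!: summable_lap_terms_bounded[where C = 1])
    qed (use assms(1) True boundary in auto)
  qed (rule boundary)
qed

lemma capacitary_potential_energy: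
  assumes "finite D" "capacitary_potential K D f"
  shows "energy b (\<lambda>_. 0) p f = (\<Sum>x\<in>K. lap f x)"
proof -
  note K_sub = capacitary_potential_subset[OF assms(2)]
  have "energy b (\<lambda>_. 0) p f = (\<Sum>x\<in>D - K. f x * lap f x) + (\<Sum>x\<in>K. f x * lap f x)"
    using energy_eq_sum_lap[OF assms(1) capacitary_potential_support[OF assms(2)]]
      sum.subset_diff[OF K_sub assms(1)] by simp
  also have "\<dots> = (\<Sum>x\<in>K. lap f x)"
    using capacitary_potential_harmonic[OF assms(2)] capacitary_potential_one[OF assms(2)] by simp
  finally show ?thesis .
qed

lemma capacitary_potential_energy_le:
  assumes "finite D" "capacitary_potential K D f" "{x. \<psi> x \<noteq> 0} \<subseteq> D" "\<And>x. x \<in> K \<Longrightarrow> 1 \<le> \<psi> x"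
  shows "energy b (\<lambda>_. 0) p f \<le> energy b (\<lambda>_. 0) p \<psi>"
proof -
  note K_sub = capacitary_potential_subset[OF assms(2)]
  have "(\<Sum>x\<in>D. (\<psi> x - f x) * lap f x)
      = (\<Sum>x\<in>D - K. (\<psi> x - f x) * lap f x) + (\<Sum>x\<in>K. (\<psi> x - f x) * lap f x)"
    by (rule sum.subset_diff[OF K_sub assms(1)])
  also have "\<dots> = (\<Sum>x\<in>K. (\<psi> x - 1) * lap f x)"
    using capacitary_potential_harmonic[OF assms(2)] capacitary_potential_one[OF assms(2)] by simp
  also have "\<dots> \<ge> 0"
  proof (intro sum_nonneg mult_nonneg_nonneg)
    fix x
    assume "x \<in> K"
    then show "0 \<le> \<psi> x - 1"
      using assms(4) by simp
    show "0 \<le> lap f x"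
      using capacitary_potential_range[OF assms(2)] capacitary_potential_one[OF assms(2) \<open>x \<in> K\<close>]
      by (intro lap_nonneg_at_max) simp
  qed
  finally have "0 \<le> p * (\<Sum>x\<in>D. (\<psi> x - f x) * lap f x)"
    using p_gt_1 by simp
  then show ?thesis
    using energy_ge_linearization[OF assms(1) capacitary_potential_support[OF assms(2)] assms(3)]
    by linarith
qed

text \<open>Small energy forces small increments along a path from \<open>z\<close> to \<open>x0\<close>.\<close>
lemma capacitary_potential_close_to_one:
  assumes "p_parabolic b (\<lambda>_. 0) p" "0 < \<eta>"
  obtains D f where "finite D" "capacitary_potential {z} D f" "1 - \<eta> \<le> f x0"
proof -
  obtain \<delta> where "0 < \<delta>"
    and \<delta>: "\<And>f. \<forall>w w'. b w w' * \<bar>f w - f w'\<bar> powr p \<le> \<delta> \<Longrightarrow> \<bar>f z - f x0\<bar> \<le> \<eta>"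
    using small_edge_terms_imp_close[OF connected assms(2)] by blast
  obtain \<psi> where \<psi>: "finite {x. \<psi> x \<noteq> 0}" "1 \<le> \<psi> z" "energy b (\<lambda>_. 0) p \<psi> < \<delta>"
    using assms(1) \<open>0 < \<delta>\<close> unfolding p_parabolic_iff_small_energy by (metis finite.simps insertI1)
  define D where "D = {x. \<psi> x \<noteq> 0} \<union> {z}"
  have "finite D"
    using \<psi>(1) by (simp add: D_def)
  obtain f where f: "capacitary_potential {z} D f"
    using capacitary_potential_exists[of "{z}" D] by (auto simp: D_def)
  have "energy b (\<lambda>_. 0) p f \<le> energy b (\<lambda>_. 0) p \<psi>"
    using \<psi>(2) by (intro capacitary_potential_energy_le[OF \<open>finite D\<close> f]) (auto simp: D_def)
  then have "b w w' * \<bar>f w - f w'\<bar> powr p \<le> \<delta>" for w w'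
    using edge_term_le_energy[OF \<open>finite D\<close> capacitary_potential_support[OF f], of w w'] \<psi>(3)
    by linarith
  then have "\<bar>f z - f x0\<bar> \<le> \<eta>"
    using \<delta> by blast
  then show ?thesis
    using that[OF \<open>finite D\<close> f] capacitary_potential_one[OF f] by simp
qed

lemma subharmonic_le_harmonic:
  assumes "finite D" "u \<in> Fp b p V" "\<And>x. x \<in> V \<Longrightarrow> lap u x \<le> 0"
    and "\<And>y. \<bar>h y\<bar> \<le> C" "\<And>x. x \<in> V \<inter> D \<Longrightarrow> lap h x = 0"
    and "\<And>y. y \<in> edge_boundary b V \<Longrightarrow> u y \<le> h y" "\<And>y. y \<in> V - D \<Longrightarrow> u y \<le> h y"
    and "x0 \<in> V"
  shows "u x0 \<le> h x0"
proof (cases "x0 \<in> D")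
  case True
  show ?thesis
  proof (rule comparison_principle[where A = "V \<inter> D"])
    fix x
    assume x: "x \<in> V \<inter> D"
    show "(\<lambda>y. b x y * sgn_powr (u x - u y) (p - 1)) summable_on UNIV"
      using x by (intro summable_lap_terms_Fp[OF assms(2)]) simp
    show "(\<lambda>y. b x y * sgn_powr (h x - h y) (p - 1)) summable_on UNIV"
      using assms(4) by (rule summable_lap_terms_bounded)
    show "lap u x \<le> lap h x"
      using assms(3,5) x by simp
    fix y
    assume "0 < b x y" "y \<notin> V \<inter> D"
    then have "y \<in> V - D \<or> y \<in> edge_boundary b V"
      using x b_sym[of x y] by (auto simp: edge_boundary_def)
    then show "u y \<le> h y"
      using assms(6,7) by blast
  qed (use assms(1,8) True in auto)
next
  case False
  then show ?thesis
    using assms(7,8) by simp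
qed

lemma subharmonic_le_by_potential:
  assumes "z \<in> edge_boundary b V" "finite D" "capacitary_potential {z} D f"
    and "u \<in> Fp b p V" "\<And>x. x \<in> V \<Longrightarrow> lap u x \<le> 0"
    and "\<And>x. x \<in> V \<union> edge_boundary b V \<Longrightarrow> u x \<le> S" "\<And>x. x \<in> edge_boundary b V \<Longrightarrow> u x \<le> M"
    and "M \<le> S" "x0 \<in> V"
  shows "u x0 \<le> M + (S - M) * (1 - f x0)"
proof -
  define h where "h = (\<lambda>y. M + (S - M) * (1 - f y))"
  note f = capacitary_potential_range[OF assms(3)] capacitary_potential_zero[OF assms(3)]
    capacitary_potential_harmonic[OF assms(3)]
  have h_bounds: "M \<le> h y" "h y \<le> S" for y
    using f(1)[of y] assms(8) mult_left_le[of "1 - f y" "S - M"] by (auto simp: h_def)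
  have "z \<notin> V"
    using assms(1) by (simp add: edge_boundary_def)
  have "u x0 \<le> h x0"
  proof (rule subharmonic_le_harmonic[OF assms(2,4,5)])
    show "\<bar>h y\<bar> \<le> \<bar>M\<bar> + \<bar>S\<bar>" for y
      using h_bounds[of y] by linarith
    show "lap h x = 0" if "x \<in> V \<inter> D" for x
      using lap_affine[of "S - M" M f x] assms(8) f(3)[of x] that \<open>z \<notin> V\<close> by (auto simp: h_def)
    show "u y \<le> h y" if "y \<in> edge_boundary b V" for y
      using assms(7)[OF that] h_bounds(1)[of y] by simp
    show "u y \<le> h y" if "y \<in> V - D" for y
      using assms(6)[of y] f(2)[of y] that by (simp add: h_def)
  qed (use assms(9) in auto)
  then show ?thesis
    by (simp add: h_def)
qed

lemma parabolic_subharmonic_le_boundary_bound: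
  assumes "p_parabolic b (\<lambda>_. 0) p" "z \<in> edge_boundary b V"
    and "u \<in> Fp b p V" "\<And>x. x \<in> V \<Longrightarrow> lap u x \<le> 0"
    and "\<And>x. x \<in> V \<union> edge_boundary b V \<Longrightarrow> u x \<le> S" "\<And>x. x \<in> edge_boundary b V \<Longrightarrow> u x \<le> M"
    and "M \<le> S" "x0 \<in> V"
  shows "u x0 \<le> M"
proof (rule field_le_epsilon)
  fix e :: real
  assume "0 < e"
  define \<eta> where "\<eta> = e / (S - M + 1)"
  have "0 < \<eta>"
    using \<open>0 < e\<close> assms(7) by (simp add: \<eta>_def)
  obtain D f where "finite D" "capacitary_potential {z} D f" "1 - \<eta> \<le> f x0"
    using capacitary_potential_close_to_one[OF assms(1) \<open>0 < \<eta>\<close>] by blast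
  have "u x0 \<le> M + (S - M) * (1 - f x0)"
    using subharmonic_le_by_potential[OF assms(2) \<open>finite D\<close> \<open>capacitary_potential {z} D f\<close> assms(3-8)] .
  also have "\<dots> \<le> M + (S - M) * \<eta>"
    using assms(7) \<open>1 - \<eta> \<le> f x0\<close> by (intro add_left_mono mult_left_mono) auto
  also have "(S - M) * \<eta> \<le> e"
    using \<open>0 < e\<close> assms(7) by (simp add: \<eta>_def field_simps)
  finally show "u x0 \<le> M + e"
    by simp
qed

lemma parabolic_imp_max_principle:
  assumes "p_parabolic b (\<lambda>_. 0) p" "edge_boundary b V \<noteq> {}"
    and "bounded (u ` (V \<union> edge_boundary b V))" "u \<in> Fp b p V" "\<And>x. x \<in> V \<Longrightarrow> lap u x \<le> 0"
  shows "Sup (u ` (V \<union> edge_boundary b V)) = Sup (u ` edge_boundary b V)"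
proof -
  define E where "E = edge_boundary b V"
  define S where "S = Sup (u ` (V \<union> E))"
  define M where "M = Sup (u ` E)"
  have bdd: "bdd_above (u ` (V \<union> E))"
    using assms(3) by (simp add: E_def bounded_imp_bdd_above)
  then have u_le_S: "u x \<le> S" if "x \<in> V \<union> E" for x
    using that by (simp add: S_def cSup_upper)
  have "bdd_above (u ` E)"
    using bdd by (rule bdd_above_mono) auto
  then have u_le_M: "u x \<le> M" if "x \<in> E" for x
    using that by (simp add: M_def cSup_upper)
  have "M \<le> S"
    unfolding M_def S_def using assms(2) bdd by (intro cSup_subset_mono) (auto simp: E_def)
  obtain z where "z \<in> E"
    using assms(2) by (auto simp: E_def)
  have "u x \<le> M" if "x \<in> V" for x
    using parabolic_subharmonic_le_boundary_bound[OF assms(1) _ assms(4)] assms(5) u_le_S u_le_M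
      \<open>z \<in> E\<close> \<open>M \<le> S\<close> that
    unfolding E_def by blast
  then have "S \<le> M"
    unfolding S_def using assms(2) u_le_M by (intro cSup_least) (auto simp: E_def)
  then show ?thesis
    using \<open>M \<le> S\<close> by (simp add: S_def M_def E_def)
qed

lemma capacitary_potential_limit:
  assumes "finite K" "\<And>n. finite (B n)" "\<And>n. B n \<subseteq> B (Suc n)" "\<And>x. \<exists>n. x \<in> B n"
    and "\<And>n. capacitary_potential K (B n) (F n)"
  obtains f where "range f \<subseteq> {0..1}" "\<And>x. x \<in> K \<Longrightarrow> f x = 1" "\<And>x. x \<notin> K \<Longrightarrow> lap f x = 0"
    and "(\<lambda>n. energy b (\<lambda>_. 0) p (F n)) \<longlonglongrightarrow> (\<Sum>x\<in>K. lap f x)"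
proof -
  note F = capacitary_potential_range[OF assms(5)] capacitary_potential_one[OF assms(5)]
    capacitary_potential_harmonic[OF assms(5)]
  have F_range: "range (F n) \<subseteq> {0..1}" for n
    using F(1) by blast
  have F_inc: "F n y \<le> F (Suc n) y" for n y
    using assms(2,3,5) by (rule capacitary_potential_mono) (rule assms(5))
  obtain f where F_lim: "\<And>y. (\<lambda>n. F n y) \<longlonglongrightarrow> f y" and f_range: "range f \<subseteq> {0..1}"
    using incseq_unit_functions_limit[of F, OF F_inc F_range] by metis
  have f_one: "f x = 1" if "x \<in> K" for x
    using F_lim[of x] F(2)[OF that] by (simp add: LIMSEQ_const_iff)
  have lap_lim: "(\<lambda>n. lap (F n) x) \<longlonglongrightarrow> lap f x" for x
    unfolding lap_eq_lap_at using F(1) F_range by (intro tendsto_lap_at F_lim) auto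
  have "lap f x = 0" if "x \<notin> K" for x
  proof -
    obtain N where "x \<in> B N"
      using assms(4) by blast
    then have "x \<in> B n" if "N \<le> n" for n
      using lift_Suc_mono_le[of B, OF assms(3) that] by blast
    then have "eventually (\<lambda>n. lap (F n) x = 0) sequentially"
      using F(3) \<open>x \<notin> K\<close> unfolding eventually_sequentially by blast
    then show ?thesis
      using LIMSEQ_unique[OF lap_lim tendsto_eventually] by blast
  qed
  moreover have "(\<lambda>n. energy b (\<lambda>_. 0) p (F n)) \<longlonglongrightarrow> (\<Sum>x\<in>K. lap f x)"
    unfolding capacitary_potential_energy[OF assms(2,5)] by (intro tendsto_sum lap_lim)
  ultimately show ?thesis
    using that f_range f_one by metis
qed

lemma max_principle_forces_one:
  assumes max_principle: "\<And>V u. V \<noteq> UNIV \<Longrightarrow> edge_boundary b V \<noteq> {} \<Longrightarrow>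
      bounded (u ` (V \<union> edge_boundary b V)) \<Longrightarrow> u \<in> Fp b p V \<Longrightarrow> (\<forall>x\<in>V. lap u x \<le> 0) \<Longrightarrow>
      Sup (u ` (V \<union> edge_boundary b V)) = Sup (u ` edge_boundary b V)"
    and "finite K" "K \<noteq> {}" "range f \<subseteq> {0..1}" "\<And>x. x \<in> K \<Longrightarrow> f x = 1" "\<And>x. x \<notin> K \<Longrightarrow> lap f x = 0"
  shows "f y = 1"
proof -
  define E where "E = edge_boundary b (- K)"
  have f_range: "0 \<le> f y" "f y \<le> 1" for y
    using assms(4) by (auto simp: image_subset_iff)
  obtain x' y' where "0 < b x' y'" "x' \<in> K" "y' \<notin> K"
    using exists_edge_leaving[OF assms(2)] assms(3) by blast
  then have "x' \<in> E"
    by (auto simp: E_def edge_boundary_def b_sym)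
  moreover have "E \<subseteq> K"
    by (auto simp: E_def edge_boundary_def)
  ultimately have image_E: "(\<lambda>y. - f y) ` E = {-1}"
    using assms(5) by force
  have "\<bar>f y - f x\<bar> powr (p - 1) \<le> 1" for x y
    using f_range[of x] f_range[of y] p_gt_1 by (intro powr_le1) auto
  then have "(\<lambda>y. b x y * \<bar>- f x - - f y\<bar> powr (p - 1)) summable_on UNIV" for x
    by (intro summable_weighted_bounded[where C = 1]) simp
  moreover have "bounded ((\<lambda>y. - f y) ` (- K \<union> E))"
    unfolding bounded_real using f_range by (intro exI[of _ 1]) auto
  moreover have "lap (\<lambda>y. - f y) x \<le> 0" if "x \<in> - K" for x
    using that assms(6) by (simp add: lap_uminus)
  ultimately have "Sup ((\<lambda>y. - f y) ` (- K \<union> E)) = -1"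
    using max_principle[of "- K" "\<lambda>y. - f y"] image_E \<open>x' \<in> E\<close> assms(3) by (auto simp: E_def Fp_def)
  moreover have "bdd_above ((\<lambda>y. - f y) ` (- K \<union> E))"
    using \<open>bounded ((\<lambda>y. - f y) ` (- K \<union> E))\<close> by (rule bounded_imp_bdd_above)
  ultimately have "- f y \<le> -1" if "y \<notin> K" for y
    using that cSup_upper[of "- f y" "(\<lambda>y. - f y) ` (- K \<union> E)"] by auto
  then show ?thesis
    using assms(5) f_range(2)[of y] by (cases "y \<in> K") (auto intro: order.antisym)
qed

lemma max_principle_imp_parabolic:
  assumes "countable (UNIV :: 'a set)"
    and max_principle: "\<And>V u. V \<noteq> UNIV \<Longrightarrow> edge_boundary b V \<noteq> {} \<Longrightarrow>
      bounded (u ` (V \<union> edge_boundary b V)) \<Longrightarrow> u \<in> Fp b p V \<Longrightarrow> (\<forall>x\<in>V. lap u x \<le> 0) \<Longrightarrow>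
      Sup (u ` (V \<union> edge_boundary b V)) = Sup (u ` edge_boundary b V)"
  shows "p_parabolic b (\<lambda>_. 0) p"
  unfolding p_parabolic_iff_small_energy
proof (intro allI impI)
  fix K :: "'a set" and \<epsilon> :: real
  assume "finite K" "0 < \<epsilon>"
  show "\<exists>\<phi>. finite {x. \<phi> x \<noteq> 0} \<and> (\<forall>x\<in>K. 1 \<le> \<phi> x) \<and> energy b (\<lambda>_. 0) p \<phi> < \<epsilon>"
  proof (cases "K = {}")
    case True
    then show ?thesis
      using energy_eq_sum_lap[of "{}" "\<lambda>_. 0"] \<open>0 < \<epsilon>\<close> by (intro exI[of _ "\<lambda>_. 0"]) simp
  next
    case False
    obtain B where B: "\<And>n. finite (B n)" "\<And>n. K \<subseteq> B n" "\<And>n. B n \<subseteq> B (Suc n)" "\<And>x. \<exists>n. x \<in> B n"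
      using countable_exhaustion[OF assms(1) \<open>finite K\<close>] by blast
    obtain F where F: "\<And>n. capacitary_potential K (B n) (F n)"
      using capacitary_potential_exists[OF B(2)] by metis
    obtain f where f: "range f \<subseteq> {0..1}" "\<And>x. x \<in> K \<Longrightarrow> f x = 1" "\<And>x. x \<notin> K \<Longrightarrow> lap f x = 0"
      and energy_lim: "(\<lambda>n. energy b (\<lambda>_. 0) p (F n)) \<longlonglongrightarrow> (\<Sum>x\<in>K. lap f x)"
      using capacitary_potential_limit[OF \<open>finite K\<close> B(1,3,4) F] by blast
    have "f = (\<lambda>_. 1)"
      using max_principle_forces_one[OF max_principle \<open>finite K\<close> False f] by blast
    then have "(\<lambda>n. energy b (\<lambda>_. 0) p (F n)) \<longlonglongrightarrow> 0"
      using energy_lim by (simp add: lap_def)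
    then obtain n where "energy b (\<lambda>_. 0) p (F n) < \<epsilon>"
      using \<open>0 < \<epsilon>\<close> by (metis order_tendstoD(2) eventually_sequentially order.refl)
    moreover have "finite {x. F n x \<noteq> 0}"
      using capacitary_potential_support[OF F] B(1) by (rule finite_subset)
    ultimately show ?thesis
      using capacitary_potential_one[OF F] by (intro exI[of _ "F n"]) auto
  qed
qed

end

theorem proposition3p12:
  fixes b :: "'a \<Rightarrow> 'a \<Rightarrow> real" and m c :: "'a \<Rightarrow> real" and p :: real
  assumes "weighted_graph b m c"
    and "c = (\<lambda>x. 0)"
    and "1 < p"
  shows "p_parabolic b c p \<longleftrightarrow>
    (\<forall>V u. V \<noteq> UNIV \<longrightarrow> edge_boundary b V \<noteq> {} \<longrightarrow>
       bounded (u ` (V \<union> edge_boundary b V)) \<longrightarrow>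
       u \<in> Fp b p V \<longrightarrow>
       (\<forall>x\<in>V. p_laplacian b m p u x \<le> 0) \<longrightarrow>
       Sup (u ` (V \<union> edge_boundary b V)) = Sup (u ` edge_boundary b V))"
proof -
  have countable: "countable (UNIV :: 'a set)" and m_pos: "\<And>x. 0 < m x"
    and graph: "infinite (UNIV :: 'a set)" "\<And>x y. b x y = b y x" "\<And>x y. 0 \<le> b x y"
      "\<And>x. (\<lambda>y. b x y) summable_on UNIV" "\<And>x y. (\<lambda>u v. 0 < b u v)\<^sup>*\<^sup>* x y"
    using assms(1) unfolding weighted_graph_def by auto
  interpret connected_p_graph b p
    by unfold_locales (use graph assms(3) in auto)
  have lap_iff: "(\<forall>x\<in>V. p_laplacian b m p u x \<le> 0) \<longleftrightarrow> (\<forall>x\<in>V. lap u x \<le> 0)" for V u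
    by (simp add: p_laplacian_nonpos_iff[OF m_pos])
  show ?thesis
    unfolding assms(2) lap_iff
  proof (intro iffI allI impI)
    fix V u
    assume "p_parabolic b (\<lambda>x. 0) p" "edge_boundary b V \<noteq> {}" "bounded (u ` (V \<union> edge_boundary b V))"
      "u \<in> Fp b p V" "\<forall>x\<in>V. lap u x \<le> 0"
    then show "Sup (u ` (V \<union> edge_boundary b V)) = Sup (u ` edge_boundary b V)"
      by (intro parabolic_imp_max_principle) auto
  next
    assume "\<forall>V u. V \<noteq> UNIV \<longrightarrow> edge_boundary b V \<noteq> {} \<longrightarrow> bounded (u ` (V \<union> edge_boundary b V)) \<longrightarrow>
      u \<in> Fp b p V \<longrightarrow> (\<forall>x\<in>V. lap u x \<le> 0) \<longrightarrow>
      Sup (u ` (V \<union> edge_boundary b V)) = Sup (u ` edge_boundary b V)"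
    then show "p_parabolic b (\<lambda>x. 0) p"
      by (intro max_principle_imp_parabolic[OF countable]) blast
  qed
qed

end
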